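(* For any channel $W:\mathcal{X}\to\mathcal{P}(\mathcal{Y})$, $E_{sp}(R,W)$ is convex in $R$ on $\mathbb{R}_+$, finite on $(C_{0^+,W},\infty)$, and continuous on the closure of $(C_{0^+,W},\infty)$ in $\mathbb{R}_+$. Furthermore $E_{sp}(R,W)$ is nonincreasing in $R$ on $(0,C_{1,W}]$ and nondecreasing on $[C_{1,W},\infty)$. In particular, with $\chi=\sup\{\alpha:C_{\alpha,W}<\infty\}$, $$E_{sp}(R,W)=\begin{cases}\infty& R<C_{0^+,W}\\ \sup_{\alpha\in(0,1)}\frac{1-\alpha}{\alpha}(C_{\alpha,W}-R)& R=C_{0^+,W}\\ \sup_{\alpha\in[\phi,1)}\frac{1-\alpha}{\alpha}(C_{\alpha,W}-R)& R=C_{\phi,W}\text{ for some }\phi\in(0,1)\\ 0& R\ge C_{\chi,W}\text{ and }\chi=1\\ \sup_{\alpha\in[1,\phi]}\frac{1-\alpha}{\alpha}(C_{\alpha,W}-R)& R=C_{\phi,W}\text{ for some }\phi\in[1,\chi)\\ \sup_{\alpha\in[1,\chi)}\frac{1-\alpha}{\alpha}(C_{\alpha,W}-R)& R\ge C_{\chi,W}\text{ and }\chi>1.\end{cases}$$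
   Context: A channel $W:\mathcal{X}\to\mathcal{P}(\mathcal{Y})$ is any function from a set $\mathcal{X}$ to probability measures on $(\mathsf{Y},\mathcal{Y})$. Rényi divergence $D_\alpha(w\|q)=\frac{1}{\alpha-1}\ln E_\nu[(\frac{dw}{d\nu})^\alpha(\frac{dq}{d\nu})^{1-\alpha}]$ ($\alpha\ne1$), $D_1$ the Kullback–Leibler divergence. Rényi information for finitely supported $p$: $I_\alpha(p;W)=\frac{\alpha}{\alpha-1}\ln E_\nu[(\sum_xp(x)(\frac{dW(x)}{d\nu})^\alpha)^{1/\alpha}]$ ($\alpha\ne1$), $I_1(p;W)=\sum_xp(x)D_1(W(x)\|\sum_{x'}p(x')W(x'))$; Rényi capacity $C_{\alpha,W}=\sup_pI_\alpha(p;W)$, which is nondecreasing in $\alpha$; $C_{0^+,W}=\lim_{\alpha\downarrow0}C_{\alpha,W}$. Sphere packing exponent $E_{sp}(R,W)=\sup_{\alpha\in(0,\infty)}\frac{1-\alpha}{\alpha}(C_{\alpha,W}-R)$ for $R\in\mathbb{R}_+$. *)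

theory Defs
  imports "HOL-Probability.Probability"
begin

(* Channel: W :: 'x => 'y measure, every W x a probability measure on a common
   measurable space (checked by the assumptions of the theorem). *)

(* mixture  q_p = sum_x p(x) W(x)  (used as the reference measure nu) *)
definition mixture :: "'x pmf \<Rightarrow> ('x \<Rightarrow> 'y measure) \<Rightarrow> 'y measure" where
  "mixture p W = measure_pmf p \<bind> W"

definition renyi_info :: "real \<Rightarrow> 'x pmf \<Rightarrow> ('x \<Rightarrow> 'y measure) \<Rightarrow> real" where
  "renyi_info \<alpha> p W =
    (let q = mixture p W in
     if \<alpha> = 1 then (\<Sum>x\<in>set_pmf p. pmf p x * KL_divergence (exp 1) q (W x))
     else \<alpha> / (\<alpha> - 1) *
       ln (\<integral>y. (\<Sum>x\<in>set_pmf p. pmf p x * enn2real (RN_deriv q (W x) y) powr \<alpha>) powr (1 / \<alpha>) \<partial>q))"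

definition renyi_cap :: "real \<Rightarrow> ('x \<Rightarrow> 'y measure) \<Rightarrow> ereal" where
  "renyi_cap \<alpha> W = (SUP p\<in>{p. finite (set_pmf p)}. ereal (renyi_info \<alpha> p W))"

definition renyi_cap0 :: "('x \<Rightarrow> 'y measure) \<Rightarrow> ereal" where
  "renyi_cap0 W = Lim (at_right 0) (\<lambda>\<alpha>. renyi_cap \<alpha> W)"

definition cap_order :: "('x \<Rightarrow> 'y measure) \<Rightarrow> ereal" where
  "cap_order W = Sup {ereal \<alpha> | \<alpha>. 0 < \<alpha> \<and> renyi_cap \<alpha> W < \<infinity>}"

(* C_{a,W} at an extended-real order a; order infinity = limit (sup) of C_alpha *)
definition renyi_cap_ext :: "ereal \<Rightarrow> ('x \<Rightarrow> 'y measure) \<Rightarrow> ereal" where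
  "renyi_cap_ext a W = (if a = \<infinity> then (SUP \<alpha>\<in>{0<..}. renyi_cap \<alpha> W)
                        else renyi_cap (real_of_ereal a) W)"

definition sp_term :: "real \<Rightarrow> real \<Rightarrow> ('x \<Rightarrow> 'y measure) \<Rightarrow> ereal" where
  "sp_term \<alpha> R W = ereal ((1 - \<alpha>) / \<alpha>) * (renyi_cap \<alpha> W - ereal R)"

definition E_sp :: "real \<Rightarrow> ('x \<Rightarrow> 'y measure) \<Rightarrow> ereal" where
  "E_sp R W = (SUP \<alpha>\<in>{0<..}. sp_term \<alpha> R W)"

end

theory Submission
  imports Defs
begin

text \<open>For a fixed input distribution \<open>p\<close>, \<open>I\<^sub>\<alpha>(p;W)\<close> is the minimum over output densities \<open>g\<close> of a
  Renyi divergence that, for fixed \<open>g\<close>, is nondecreasing in \<open>\<alpha>\<close> (by tangent-line bounds of Bernoulli type);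
  hence \<open>I\<^sub>\<alpha>\<close> and \<open>C\<^sub>\<alpha>\<close> are nondecreasing in \<open>\<alpha>\<close>.  On \<open>(0,1)\<close> moreover
  \<open>(1 - \<alpha>)/\<alpha> \<cdot> I\<^sub>\<alpha> = - ln \<integral> (\<Sum>\<^sub>x p(x) (dW(x)/dq)\<^sup>\<alpha>)\<^bsup>1/\<alpha>\<^esup> dq\<close> is nonincreasing, because power
  means grow with the exponent.  Nothing else about \<open>\<alpha> \<mapsto> C\<^sub>\<alpha>\<close> is needed: \<open>E\<^sub>s\<^sub>p\<close> is a supremum of affine
  functions of \<open>R\<close>, hence convex; the scaling bound keeps it finite above \<open>C\<^sub>0\<^sub>+\<close>; convexity and lower
  semicontinuity give continuity; and the sign of \<open>(1 - \<alpha>)(C\<^sub>\<alpha> - R)\<close> decides which orders contribute to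
  the supremum.\<close>

lemma powr_tangent_le:
  fixes u v s c :: real
  assumes "0 \<le> u" "0 \<le> v" "0 < s" "s < 1" "0 < c"
  shows "u powr s * v powr (1 - s) \<le> c powr s * (s * u / c + (1 - s) * v)"
proof (cases "u = 0 \<or> v = 0")
  case True
  then show ?thesis using assms by (auto intro!: mult_nonneg_nonneg add_nonneg_nonneg)
next
  case False
  then have "(u / c) powr s * v powr (1 - s) \<le> s * (u / c) + (1 - s) * v"
    using assms by (intro Youngs_inequality_0) auto
  then have "c powr s * ((u / c) powr s * v powr (1 - s)) \<le> c powr s * (s * (u / c) + (1 - s) * v)"
    by (rule mult_left_mono) simp
  then show ?thesis using assms by (simp add: powr_divide)
qed

lemma powr_tangent_ge:
  fixes u v s c :: real
  assumes "0 \<le> u" "0 < v" "1 < s" "0 < c"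
  shows "c powr s * (s * u / c + (1 - s) * v) \<le> u powr s * v powr (1 - s)"
proof -
  define x where "x = u / c / v"
  have x: "0 \<le> x" using assms by (simp add: x_def)
  have "(x powr s) powr (1 / s) * 1 powr (1 - 1 / s) \<le> 1 powr (1 / s) * (1 / s * x powr s / 1 + (1 - 1 / s) * 1)"
    using assms by (intro powr_tangent_le) auto
  then have "x \<le> x powr s / s + (1 - 1 / s)"
    using assms x by (simp add: powr_powr)
  then have "s * x \<le> s * (x powr s / s + (1 - 1 / s))"
    using assms by (intro mult_left_mono) auto
  also have "\<dots> = x powr s + s - 1"
    using assms by (simp add: field_simps)
  finally have "s * x + (1 - s) \<le> x powr s" by simp
  then have "c powr s * (v * (s * x + (1 - s))) \<le> c powr s * (v * x powr s)"
    using assms by (intro mult_left_mono) auto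
  moreover have "v * (s * x + (1 - s)) = s * u / c + (1 - s) * v"
    using assms by (simp add: x_def field_simps)
  moreover have "c powr s * (v * x powr s) = u powr s * v powr (1 - s)"
    using assms unfolding x_def
    by (simp add: powr_divide powr_diff powr_mult field_simps)
  ultimately show ?thesis by simp
qed

lemma powr_interpolate:
  fixes f g a b t :: real
  assumes "0 \<le> f" "0 < g" "t * (b - 1) = a - 1"
  shows "(f powr b * g powr (1 - b)) powr t * f powr (1 - t) = f powr a * g powr (1 - a)"
proof (cases "f = 0")
  case False
  then have "0 < f" using assms by simp
  have a: "a = t * (b - 1) + 1" using assms by simp
  show ?thesis unfolding a using \<open>0 < f\<close> \<open>0 < g\<close>
    by (simp add: powr_def ln_mult algebra_simps flip: exp_add)
qed simp

lemma mult_ln_le_tilted: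
  fixes f g c a :: real
  assumes "0 \<le> f" "0 < g" "0 < c"
  shows "(a - 1) * (f * ln f) \<le> f powr a * g powr (1 - a) / c - f + f * ln c + (a - 1) * (f * ln g)"
proof (cases "f = 0")
  case False
  then have f: "0 < f" using assms by simp
  have "ln ((f / g) powr (a - 1) / c) \<le> (f / g) powr (a - 1) / c - 1"
    using f assms by (intro ln_le_minus_one) simp
  then have "f * ((a - 1) * (ln f - ln g) - ln c) \<le> f * ((f / g) powr (a - 1) / c - 1)"
    using f assms by (intro mult_left_mono) (simp_all add: ln_div ln_powr)
  moreover have "f * (f / g) powr (a - 1) = f powr a * g powr (1 - a)"
    using f assms by (simp add: powr_divide powr_diff powr_minus field_simps)
  ultimately show ?thesis by (simp add: algebra_simps)
qed simp

lemma power_mean_mono: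
  fixes w f :: "'a \<Rightarrow> real"
  assumes "finite P" "\<And>x. x \<in> P \<Longrightarrow> 0 \<le> w x" "(\<Sum>x\<in>P. w x) = 1"
    and "\<And>x. x \<in> P \<Longrightarrow> 0 \<le> f x" "0 < a" "a < b"
  shows "(\<Sum>x\<in>P. w x * f x powr a) powr (1 / a) \<le> (\<Sum>x\<in>P. w x * f x powr b) powr (1 / b)"
proof -
  define c where "c = (\<Sum>x\<in>P. w x * f x powr b)"
  define t where "t = a / b"
  have t: "0 < t" "t < 1" using assms by (auto simp: t_def)
  show ?thesis
  proof (cases "c = 0")
    case True
    then have "\<forall>x\<in>P. w x * f x powr b = 0"
      using assms unfolding c_def by (subst (asm) sum_nonneg_eq_0_iff) auto
    then have "(\<Sum>x\<in>P. w x * f x powr a) = 0" by (auto intro: sum.neutral)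
    then show ?thesis using True by (simp add: c_def)
  next
    case False
    then have c: "0 < c" using assms unfolding c_def by (simp add: less_le sum_nonneg)
    have "(\<Sum>x\<in>P. w x * f x powr a) \<le> (\<Sum>x\<in>P. w x * (c powr t * (t * f x powr b / c + (1 - t) * 1)))"
    proof (intro sum_mono mult_left_mono)
      fix x assume x: "x \<in> P"
      have "f x powr a = (f x powr b) powr t * 1 powr (1 - t)"
        using assms by (simp add: t_def powr_powr)
      also have "\<dots> \<le> c powr t * (t * f x powr b / c + (1 - t) * 1)"
        using t c by (intro powr_tangent_le) auto
      finally show "f x powr a \<le> c powr t * (t * f x powr b / c + (1 - t) * 1)" .
    qed (use assms in auto)
    also have "\<dots> = (\<Sum>x\<in>P. c powr t * t / c * (w x * f x powr b) + c powr t * (1 - t) * w x)"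
      by (intro sum.cong) (auto simp: algebra_simps)
    also have "\<dots> = c powr t * t / c * c + c powr t * (1 - t) * (\<Sum>x\<in>P. w x)"
      unfolding sum.distrib sum_distrib_left[symmetric] c_def ..
    also have "\<dots> = c powr t" using c assms by (simp add: algebra_simps)
    finally have "(\<Sum>x\<in>P. w x * f x powr a) powr (1 / a) \<le> (c powr t) powr (1 / a)"
      using assms by (intro powr_mono2) (auto intro!: sum_nonneg)
    also have "\<dots> = c powr (1 / b)" using assms by (simp add: powr_powr t_def)
    finally show ?thesis by (simp add: c_def)
  qed
qed

lemma abs_mult_ln_le:
  fixes t K :: real
  assumes "0 \<le> t" "t \<le> K"
  shows "\<bar>t * ln t\<bar> \<le> 1 + K * K"
proof (cases "t = 0")
  case False
  then have t: "0 < t" using assms by simp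
  have "t * ln t \<le> t * (t - 1)"
    using t by (intro mult_left_mono ln_le_minus_one) auto
  moreover have "t * - ln t \<le> t * (1 / t - 1)"
    using t ln_le_minus_one[of "1 / t"] by (intro mult_left_mono) (auto simp: ln_div)
  ultimately have "t * ln t \<le> t * t - t" "- (t * ln t) \<le> 1 - t"
    using t by (simp_all add: right_diff_distrib)
  moreover have "t * t \<le> K * K" using assms by (intro mult_mono) auto
  ultimately show ?thesis using t zero_le_square[of K] unfolding abs_le_iff by linarith
qed simp

locale finite_input =
  fixes W :: "'x \<Rightarrow> 'y measure" and M :: "'y measure" and p :: "'x pmf"
  assumes prob_space_W: "\<And>x. prob_space (W x)" and sets_W: "\<And>x. sets (W x) = sets M"
    and finite_support: "finite (set_pmf p)"
begin

definition q :: "'y measure" where "q = mixture p W"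

definition dens :: "'x \<Rightarrow> 'y \<Rightarrow> real" where "dens x y = enn2real (RN_deriv q (W x) y)"

lemma W_measurable: "W \<in> measure_pmf p \<rightarrow>\<^sub>M subprob_algebra M"
  unfolding measurable_pmf_measure1 space_subprob_algebra
  using prob_space_W sets_W prob_space_imp_subprob_space by blast

lemma sets_q [measurable_cong]: "sets q = sets M"
  unfolding q_def mixture_def by (rule sets_bind) (auto simp: sets_W)

lemma measurable_q_iff: "h \<in> borel_measurable q \<longleftrightarrow> h \<in> borel_measurable M"
  by (simp add: measurable_cong_sets[OF sets_q refl])

lemma prob_space_q: "prob_space q"
  unfolding q_def mixture_def
  by (rule measure_pmf.prob_space_bind[OF _ W_measurable]) (auto simp: prob_space_W)

interpretation q: prob_space q by (rule prob_space_q)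

lemma emeasure_q:
  "A \<in> sets M \<Longrightarrow> emeasure q A = (\<Sum>x\<in>set_pmf p. ennreal (pmf p x) * emeasure (W x) A)"
  unfolding q_def mixture_def
  by (subst emeasure_bind[OF _ W_measurable])
     (auto simp: nn_integral_measure_pmf_finite[OF finite_support] mult.commute)

lemma absolutely_continuous_W:
  assumes x: "x \<in> set_pmf p" shows "absolutely_continuous q (W x)"
  unfolding absolutely_continuous_def
proof
  fix A assume A: "A \<in> null_sets q"
  then have A_sets: "A \<in> sets M" using sets_q by (auto simp: null_sets_def)
  have "(\<Sum>x\<in>set_pmf p. ennreal (pmf p x) * emeasure (W x) A) = 0"
    using A emeasure_q[OF A_sets] by (auto simp: null_sets_def)
  then have "ennreal (pmf p x) * emeasure (W x) A = 0"
    using finite_support x by (subst (asm) sum_eq_0_iff) auto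
  then show "A \<in> null_sets (W x)" using A_sets x sets_W by (auto simp: null_sets_def set_pmf_iff)
qed

lemma dens_measurable [measurable]: "dens x \<in> borel_measurable M"
  unfolding dens_def using borel_measurable_RN_deriv[of q "W x"] measurable_q_iff by simp

lemma dens_nonneg: "0 \<le> dens x y"
  unfolding dens_def by simp

lemma density_dens: assumes x: "x \<in> set_pmf p" shows "density q (\<lambda>y. ennreal (dens x y)) = W x"
proof -
  interpret Wx: prob_space "W x" by (rule prob_space_W)
  have ac: "absolutely_continuous q (W x)" "sets (W x) = sets q"
    using absolutely_continuous_W x sets_W sets_q by auto
  have "AE y in q. RN_deriv q (W x) y \<noteq> \<infinity>"
    by (rule q.RN_deriv_finite[OF _ ac]) (simp add: Wx.sigma_finite_measure_axioms)
  then have "density q (\<lambda>y. ennreal (dens x y)) = density q (RN_deriv q (W x))"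
    by (intro density_cong) (auto simp: dens_def less_top)
  also have "\<dots> = W x" by (rule q.density_RN_deriv[OF ac])
  finally show ?thesis .
qed

lemma nn_integral_dens:
  assumes "x \<in> set_pmf p" "A \<in> sets M"
  shows "(\<integral>\<^sup>+y. ennreal (dens x y) * indicator A y \<partial>q) = emeasure (W x) A"
  using assms sets_q by (simp add: emeasure_density mult.commute flip: density_dens)

lemma AE_sum_dens: "AE y in q. (\<Sum>x\<in>set_pmf p. pmf p x * dens x y) = 1"
proof -
  have "AE y in q. ennreal (\<Sum>x\<in>set_pmf p. pmf p x * dens x y) = 1"
  proof (rule q.density_unique_finite_measure)
    fix A assume A: "A \<in> sets q"
    then have A_sets: "A \<in> sets M" using sets_q by simp
    have "(\<integral>\<^sup>+y. ennreal (\<Sum>x\<in>set_pmf p. pmf p x * dens x y) * indicator A y \<partial>q)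
        = (\<integral>\<^sup>+y. (\<Sum>x\<in>set_pmf p. ennreal (pmf p x) * (ennreal (dens x y) * indicator A y)) \<partial>q)"
      by (intro nn_integral_cong)
         (auto simp: dens_nonneg ennreal_mult sum_distrib_right mult.assoc simp flip: sum_ennreal)
    also have "\<dots> = (\<Sum>x\<in>set_pmf p. ennreal (pmf p x) * emeasure (W x) A)"
      using A by (simp add: nn_integral_sum nn_integral_cmult nn_integral_dens A_sets)
    also have "\<dots> = (\<integral>\<^sup>+y. 1 * indicator A y \<partial>q)"
      using A by (simp add: emeasure_q[OF A_sets])
    finally show "(\<integral>\<^sup>+y. ennreal (\<Sum>x\<in>set_pmf p. pmf p x * dens x y) * indicator A y \<partial>q)
      = (\<integral>\<^sup>+y. 1 * indicator A y \<partial>q)" .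
  qed (auto simp: measurable_q_iff)
  then show ?thesis
    by eventually_elim (auto intro!: sum_nonneg simp: dens_nonneg)
qed

lemma sum_pmf_support: "(\<Sum>x\<in>set_pmf p. pmf p x) = 1"
  using finite_support by (rule sum_pmf_eq_1) simp

definition dens_bound :: real where "dens_bound = (\<Sum>x\<in>set_pmf p. 1 / pmf p x)"

lemma dens_bound_nonneg: "0 \<le> dens_bound"
  unfolding dens_bound_def by (auto intro!: sum_nonneg)

definition min_weight :: real where "min_weight = Min (pmf p ` set_pmf p)"

lemma min_weight_pos: "0 < min_weight"
  unfolding min_weight_def using finite_support set_pmf_not_empty[of p]
  by (subst Min_gr_iff) (auto simp: pmf_positive)

lemma min_weight_le: "x \<in> set_pmf p \<Longrightarrow> min_weight \<le> pmf p x"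
  unfolding min_weight_def using finite_support by auto

lemma AE_dens:
  "AE y in q. (\<Sum>x\<in>set_pmf p. pmf p x * dens x y) = 1 \<and> (\<forall>x\<in>set_pmf p. dens x y \<le> dens_bound)
     \<and> (\<exists>x\<in>set_pmf p. 1 \<le> dens x y)"
  using AE_sum_dens
proof eventually_elim
  case (elim y)
  have "dens x y \<le> dens_bound" if x: "x \<in> set_pmf p" for x
  proof -
    have "pmf p x * dens x y \<le> (\<Sum>x\<in>set_pmf p. pmf p x * dens x y)"
      using finite_support x by (intro member_le_sum) (auto simp: dens_nonneg)
    then have "pmf p x * dens x y \<le> 1" using elim by simp
    then have "dens x y \<le> 1 / pmf p x" using pmf_positive[OF x] by (simp add: field_simps)
    also have "\<dots> \<le> dens_bound"
      unfolding dens_bound_def using finite_support x by (intro member_le_sum) auto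
    finally show ?thesis .
  qed
  moreover have "\<exists>x\<in>set_pmf p. 1 \<le> dens x y"
  proof (rule ccontr)
    assume "\<not> ?thesis"
    then have "(\<Sum>x\<in>set_pmf p. pmf p x * dens x y) < (\<Sum>x\<in>set_pmf p. pmf p x * 1)"
      using finite_support set_pmf_not_empty[of p]
      by (intro sum_strict_mono mult_strict_left_mono) (auto simp: pmf_positive)
    then show False using elim sum_pmf_support by simp
  qed
  ultimately show ?case using elim by blast
qed

definition pmean :: "real \<Rightarrow> 'y \<Rightarrow> real" where
  "pmean a y = (\<Sum>x\<in>set_pmf p. pmf p x * dens x y powr a) powr (1 / a)"

definition A :: "real \<Rightarrow> real" where "A a = integral\<^sup>L q (pmean a)"

lemma pmean_measurable [measurable]: "pmean a \<in> borel_measurable M"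
  unfolding pmean_def by measurable

lemma pmean_nonneg: "0 \<le> pmean a y"
  unfolding pmean_def by simp

lemma pmean_powr: "0 < a \<Longrightarrow> pmean a y powr a = (\<Sum>x\<in>set_pmf p. pmf p x * dens x y powr a)"
  unfolding pmean_def by (simp add: powr_powr sum_nonneg dens_nonneg)

lemma AE_pmean_bounds:
  assumes a: "0 < a"
  shows "AE y in q. min_weight powr (1 / a) \<le> pmean a y \<and> pmean a y \<le> dens_bound"
  using AE_dens
proof eventually_elim
  case (elim y)
  have "(\<Sum>x\<in>set_pmf p. pmf p x * dens x y powr a) \<le> (\<Sum>x\<in>set_pmf p. pmf p x * dens_bound powr a)"
    using elim a by (intro sum_mono mult_left_mono powr_mono2) (auto simp: dens_nonneg)
  also have "\<dots> = dens_bound powr a" by (simp flip: sum_distrib_right add: sum_pmf_support)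
  finally have "pmean a y \<le> (dens_bound powr a) powr (1 / a)"
    unfolding pmean_def using a by (intro powr_mono2) (auto intro!: sum_nonneg simp: dens_nonneg)
  then have upper: "pmean a y \<le> dens_bound"
    using a dens_bound_nonneg by (simp add: powr_powr)
  obtain x where x: "x \<in> set_pmf p" "1 \<le> dens x y" using elim by blast
  have "1 \<le> dens x y powr a" using x(2) a by (simp add: ge_one_powr_ge_zero)
  then have "pmf p x * 1 \<le> pmf p x * dens x y powr a" by (intro mult_left_mono) auto
  then have "min_weight \<le> pmf p x * dens x y powr a" using min_weight_le[OF x(1)] by simp
  also have "\<dots> \<le> (\<Sum>x\<in>set_pmf p. pmf p x * dens x y powr a)"
    using finite_support x by (intro member_le_sum) (auto simp: dens_nonneg)
  finally have "min_weight powr (1 / a) \<le> pmean a y"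
    unfolding pmean_def using a min_weight_pos by (intro powr_mono2) auto
  with upper show ?case by simp
qed

lemma integrable_bounded:
  fixes h :: "'y \<Rightarrow> real"
  assumes "h \<in> borel_measurable M" "AE y in q. \<bar>h y\<bar> \<le> B"
  shows "integrable q h"
  using assms by (intro q.integrable_const_bound[where B = B]) (auto simp: measurable_q_iff)

lemma integrable_pmean: "0 < a \<Longrightarrow> integrable q (pmean a)"
  by (rule integrable_bounded[where B = dens_bound])
     (use AE_pmean_bounds in \<open>auto elim: AE_mp simp: pmean_nonneg\<close>)

lemma A_lower: "0 < a \<Longrightarrow> min_weight powr (1 / a) \<le> A a"
  unfolding A_def
  using integral_mono_AE[of q "\<lambda>_. min_weight powr (1 / a)" "pmean a"]
    AE_pmean_bounds integrable_pmean
  by (auto elim: AE_mp simp: q.prob_space)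

lemma A_pos: "0 < a \<Longrightarrow> 0 < A a"
  using A_lower[of a] min_weight_pos by (smt (verit) powr_gt_zero)

lemma A_1: "A 1 = 1"
proof -
  have "integral\<^sup>L q (pmean 1) = integral\<^sup>L q (\<lambda>_. 1)"
    by (rule integral_cong_AE) (use AE_sum_dens in \<open>auto simp: pmean_def dens_nonneg elim!: AE_mp\<close>)
  then show ?thesis by (simp add: A_def q.prob_space)
qed

lemma A_mono: assumes "0 < a" "a \<le> b" shows "A a \<le> A b"
proof (cases "a = b")
  case False
  have "AE y in q. pmean a y \<le> pmean b y"
    unfolding pmean_def using assms False
    by (intro AE_I2 power_mean_mono) (auto simp: finite_support sum_pmf_support dens_nonneg)
  then show ?thesis
    unfolding A_def using assms integrable_pmean[of a] integrable_pmean[of b]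
    by (intro integral_mono_AE) auto
qed simp

lemma renyi_info_eq: "a \<noteq> 1 \<Longrightarrow> renyi_info a p W = a / (a - 1) * ln (A a)"
  unfolding renyi_info_def A_def pmean_def dens_def q_def Let_def by simp

lemma integrable_mult_ln_dens:
  "x \<in> set_pmf p \<Longrightarrow> integrable q (\<lambda>y. dens x y * ln (dens x y))"
  by (rule integrable_bounded[where B = "1 + dens_bound * dens_bound"])
     (use AE_dens in \<open>auto elim!: AE_mp intro!: abs_mult_ln_le simp: dens_nonneg\<close>)

lemma KL_divergence_W:
  assumes x: "x \<in> set_pmf p"
  shows "KL_divergence (exp 1) q (W x) = integral\<^sup>L q (\<lambda>y. dens x y * ln (dens x y))"
proof -
  have "KL_divergence (exp 1) q (W x) = integral\<^sup>L (density q (\<lambda>y. ennreal (dens x y))) (\<lambda>y. ln (dens x y))"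
    unfolding KL_divergence_def entropy_density_def density_dens[OF x]
    by (simp add: log_def comp_def dens_def)
  also have "\<dots> = integral\<^sup>L q (\<lambda>y. dens x y * ln (dens x y))"
    by (subst integral_density) (auto simp: dens_nonneg measurable_q_iff)
  finally show ?thesis .
qed

lemma renyi_info_1_eq:
  "renyi_info 1 p W = integral\<^sup>L q (\<lambda>y. \<Sum>x\<in>set_pmf p. pmf p x * (dens x y * ln (dens x y)))"
proof -
  have "renyi_info 1 p W = (\<Sum>x\<in>set_pmf p. pmf p x * integral\<^sup>L q (\<lambda>y. dens x y * ln (dens x y)))"
    unfolding renyi_info_def Let_def q_def[symmetric] by (simp add: KL_divergence_W)
  also have "\<dots> = integral\<^sup>L q (\<lambda>y. \<Sum>x\<in>set_pmf p. pmf p x * (dens x y * ln (dens x y)))"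
    by (subst Bochner_Integration.integral_sum) (auto intro!: integrable_mult_ln_dens)
  finally show ?thesis .
qed

lemma integrable_sum_mult_ln_dens:
  "integrable q (\<lambda>y. \<Sum>x\<in>set_pmf p. pmf p x * (dens x y * ln (dens x y)))"
  by (auto intro!: integrable_mult_ln_dens)

text \<open>For an output density \<open>g\<close>, \<open>\<integral> tilted a g dq = exp ((a - 1) D\<^sub>a(p \<circledast> W \<parallel> p \<otimes> g q))\<close>.
  Renyi information is the optimum of this divergence over \<open>g\<close>, attained at \<open>g = opt_dens a\<close>.\<close>

definition tilted :: "real \<Rightarrow> ('y \<Rightarrow> real) \<Rightarrow> 'y \<Rightarrow> real" where
  "tilted a g y = (\<Sum>x\<in>set_pmf p. pmf p x * (dens x y powr a * g y powr (1 - a)))"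

definition output_density :: "('y \<Rightarrow> real) \<Rightarrow> bool" where
  "output_density g \<longleftrightarrow> g \<in> borel_measurable M \<and> (AE y in q. 0 < g y) \<and> integrable q g \<and> integral\<^sup>L q g = 1"

definition opt_dens :: "real \<Rightarrow> 'y \<Rightarrow> real" where "opt_dens b = (\<lambda>y. pmean b y / A b)"

lemma opt_dens_measurable [measurable]: "opt_dens b \<in> borel_measurable M"
  unfolding opt_dens_def by measurable

lemma tilted_measurable [measurable]:
  "g \<in> borel_measurable M \<Longrightarrow> tilted a g \<in> borel_measurable M"
  unfolding tilted_def by measurable

lemma tilted_nonneg: "0 \<le> tilted a g y"
  unfolding tilted_def by (auto intro!: sum_nonneg)

lemma tilted_eq_pmean: "0 < a \<Longrightarrow> tilted a g y = pmean a y powr a * g y powr (1 - a)"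
  unfolding tilted_def by (simp add: pmean_powr sum_distrib_right mult.assoc)

lemma output_density_1: "output_density (\<lambda>_. 1)"
  by (simp add: output_density_def q.prob_space)

lemma integral_tilted_le:
  assumes a: "0 < a" "a < 1" and g: "output_density g"
  shows "integrable q (tilted a g)" "integral\<^sup>L q (tilted a g) \<le> A a powr a"
proof -
  have A: "0 < A a" by (rule A_pos[OF a(1)])
  define R where "R = (\<lambda>y. A a powr a * (a * pmean a y / A a + (1 - a) * g y))"
  have R: "integrable q R" "integral\<^sup>L q R = A a powr a"
    using g integrable_pmean[OF a(1)] A by (simp_all add: R_def output_density_def flip: A_def)
  have "AE y in q. 0 < g y" using g by (simp add: output_density_def)
  then have le: "AE y in q. tilted a g y \<le> R y"
  proof eventually_elim
    case (elim y)
    show ?case unfolding R_def tilted_eq_pmean[OF a(1)]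
      by (rule powr_tangent_le) (use elim a A pmean_nonneg in auto)
  qed
  show int: "integrable q (tilted a g)"
    by (rule Bochner_Integration.integrable_bound[OF R(1)])
       (use le g in \<open>auto elim!: AE_mp simp: tilted_nonneg measurable_q_iff output_density_def\<close>)
  show "integral\<^sup>L q (tilted a g) \<le> A a powr a"
    using integral_mono_AE[OF int R(1) le] R(2) by simp
qed

lemma integral_tilted_ge:
  assumes a: "1 < a" and g: "output_density g" and int: "integrable q (tilted a g)"
  shows "A a powr a \<le> integral\<^sup>L q (tilted a g)"
proof -
  have a0: "0 < a" and A: "0 < A a" using A_pos a by simp_all
  define R where "R = (\<lambda>y. A a powr a * (a * pmean a y / A a + (1 - a) * g y))"
  have R: "integrable q R" "integral\<^sup>L q R = A a powr a"
    using g integrable_pmean[of a] a A by (simp_all add: R_def output_density_def flip: A_def)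
  have "AE y in q. 0 < g y" using g by (simp add: output_density_def)
  then have "AE y in q. R y \<le> tilted a g y"
  proof eventually_elim
    case (elim y)
    show ?case unfolding R_def tilted_eq_pmean[OF a0]
      by (rule powr_tangent_ge) (use elim a A pmean_nonneg in auto)
  qed
  then show ?thesis using integral_mono_AE[OF R(1) int] R(2) by simp
qed

lemma AE_pmean_pos: assumes "0 < b" shows "AE y in q. 0 < pmean b y"
proof -
  have pos: "0 < min_weight powr (1 / b)" using min_weight_pos by simp
  show ?thesis using AE_pmean_bounds[OF assms] by eventually_elim (use pos in linarith)
qed

lemma output_density_opt_dens: "0 < b \<Longrightarrow> output_density (opt_dens b)"
  using integrable_pmean[of b] A_pos[of b] AE_pmean_pos[of b]
  by (auto simp: output_density_def opt_dens_def elim!: AE_mp simp flip: A_def)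

lemma AE_tilted_opt_dens:
  "0 < b \<Longrightarrow> AE y in q. tilted b (opt_dens b) y = A b powr (b - 1) * pmean b y"
  using AE_pmean_pos[of b] A_pos[of b]
  by (auto elim!: AE_mp intro!: AE_I2 simp: tilted_eq_pmean opt_dens_def powr_divide powr_diff
      field_simps pmean_nonneg)

lemma tilted_opt_dens:
  assumes b: "0 < b"
  shows "integrable q (tilted b (opt_dens b))" "integral\<^sup>L q (tilted b (opt_dens b)) = A b powr b"
proof -
  have int: "integrable q (\<lambda>y. A b powr (b - 1) * pmean b y)"
    using integrable_pmean[OF b] by simp
  have mb: "tilted b (opt_dens b) \<in> borel_measurable q"
    unfolding measurable_q_iff by measurable
  show "integrable q (tilted b (opt_dens b))"
    using integrable_cong_AE[OF mb _ AE_tilted_opt_dens[OF b]] int by simp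
  have "integral\<^sup>L q (tilted b (opt_dens b)) = A b powr (b - 1) * A b"
    using integral_cong_AE[OF mb _ AE_tilted_opt_dens[OF b]] by (simp add: A_def)
  also have "\<dots> = A b powr b" using A_pos[OF b] by (simp add: powr_diff)
  finally show "integral\<^sup>L q (tilted b (opt_dens b)) = A b powr b" .
qed

lemma sum_tangent_tilted:
  "(\<Sum>x\<in>set_pmf p. pmf p x * (c powr t * (t * (dens x y powr b * g y powr (1 - b)) / c + (1 - t) * dens x y)))
    = c powr t * (t * tilted b g y / c + (1 - t) * (\<Sum>x\<in>set_pmf p. pmf p x * dens x y))"
    (is "?lhs = _")
proof -
  have "?lhs = (\<Sum>x\<in>set_pmf p. c powr t * t / c * (pmf p x * (dens x y powr b * g y powr (1 - b)))
      + c powr t * (1 - t) * (pmf p x * dens x y))"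
    by (intro sum.cong) (auto simp: algebra_simps)
  also have "\<dots> = c powr t * t / c * tilted b g y + c powr t * (1 - t) * (\<Sum>x\<in>set_pmf p. pmf p x * dens x y)"
    unfolding sum.distrib sum_distrib_left[symmetric] tilted_def ..
  finally show ?thesis by (simp add: algebra_simps)
qed

lemma AE_tilted_le_tangent:
  assumes t: "t * (b - 1) = a - 1" "0 < t" "t < 1" and "0 < c" and g: "AE y in q. 0 < g y"
  shows "AE y in q. tilted a g y \<le> c powr t * (t * tilted b g y / c + (1 - t))"
  using AE_sum_dens g
proof eventually_elim
  case (elim y)
  have "tilted a g y = (\<Sum>x\<in>set_pmf p. pmf p x * ((dens x y powr b * g y powr (1 - b)) powr t * dens x y powr (1 - t)))"
    unfolding tilted_def using elim t by (simp add: powr_interpolate dens_nonneg)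
  also have "\<dots> \<le> (\<Sum>x\<in>set_pmf p. pmf p x * (c powr t * (t * (dens x y powr b * g y powr (1 - b)) / c + (1 - t) * dens x y)))"
    using assms by (intro sum_mono mult_left_mono powr_tangent_le) (auto simp: dens_nonneg)
  finally show ?case using elim by (simp add: sum_tangent_tilted)
qed

lemma AE_tilted_ge_tangent:
  assumes t: "t * (b - 1) = a - 1" "1 < t" and "0 < c" and g: "AE y in q. 0 < g y"
  shows "AE y in q. c powr t * (t * tilted b g y / c + (1 - t)) \<le> tilted a g y"
  using AE_sum_dens g
proof eventually_elim
  case (elim y)
  have "c powr t * (t * tilted b g y / c + (1 - t))
      = (\<Sum>x\<in>set_pmf p. pmf p x * (c powr t * (t * (dens x y powr b * g y powr (1 - b)) / c + (1 - t) * dens x y)))"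
    using elim by (simp add: sum_tangent_tilted)
  also have "\<dots> \<le> (\<Sum>x\<in>set_pmf p. pmf p x * ((dens x y powr b * g y powr (1 - b)) powr t * dens x y powr (1 - t)))"
  proof (intro sum_mono mult_left_mono)
    fix x
    show "c powr t * (t * (dens x y powr b * g y powr (1 - b)) / c + (1 - t) * dens x y)
        \<le> (dens x y powr b * g y powr (1 - b)) powr t * dens x y powr (1 - t)"
    proof (cases "dens x y = 0")
      case False
      then show ?thesis using assms elim dens_nonneg[of x y] by (intro powr_tangent_ge) auto
    qed simp
  qed simp
  also have "\<dots> = tilted a g y"
    unfolding tilted_def using elim t by (simp add: powr_interpolate dens_nonneg)
  finally show ?case .
qed

lemma integral_tangent:
  fixes h :: "'y \<Rightarrow> real"
  assumes "integrable q h" "integral\<^sup>L q h = c" "c \<noteq> 0"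
  shows "integral\<^sup>L q (\<lambda>y. c powr t * (t * h y / c + (1 - t))) = c powr t"
  using assms by (simp add: q.prob_space)

lemma renyi_info_mono_below_1:
  assumes ab: "0 < a" "a < b" "b < 1"
  shows "renyi_info a p W \<le> renyi_info b p W"
proof -
  define g where "g = opt_dens b"
  define c where "c = A b powr b"
  define t where "t = (a - 1) / (b - 1)"
  have b: "0 < b" and c: "0 < c" and t: "t * (b - 1) = a - 1" "1 < t"
    using ab A_pos[of b] by (auto simp: c_def t_def field_simps)
  have g: "output_density g" "integrable q (tilted b g)" "integral\<^sup>L q (tilted b g) = c"
    using output_density_opt_dens[OF b] tilted_opt_dens[OF b] by (simp_all add: g_def c_def)
  then have pos: "AE y in q. 0 < g y" by (simp add: output_density_def)
  have "c powr t = integral\<^sup>L q (\<lambda>y. c powr t * (t * tilted b g y / c + (1 - t)))"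
    using integral_tangent[OF g(2,3)] c by simp
  also have "\<dots> \<le> integral\<^sup>L q (tilted a g)"
    using AE_tilted_ge_tangent[OF t c pos] g integral_tilted_le[of a g] ab
    by (intro integral_mono_AE) auto
  also have "\<dots> \<le> A a powr a"
    using integral_tilted_le[of a g] ab g by simp
  finally have "ln (c powr t) \<le> ln (A a powr a)"
    using c A_pos[of a] ab by (subst ln_le_cancel_iff) auto
  then have "t * (b * ln (A b)) \<le> a * ln (A a)"
    using c A_pos[of a] A_pos[of b] ab by (simp add: c_def ln_powr)
  then have "a * ln (A a) / (a - 1) \<le> t * (b * ln (A b)) / (a - 1)"
    using ab by (intro divide_right_mono_neg) auto
  then show ?thesis using ab by (simp add: renyi_info_eq t_def)
qed

lemma renyi_info_mono_above_1:
  assumes ab: "1 < a" "a < b"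
  shows "renyi_info a p W \<le> renyi_info b p W"
proof -
  define g where "g = opt_dens b"
  define c where "c = A b powr b"
  define t where "t = (a - 1) / (b - 1)"
  have b: "0 < b" and c: "0 < c" and t: "t * (b - 1) = a - 1" "0 < t" "t < 1"
    using ab A_pos[of b] by (auto simp: c_def t_def field_simps)
  have g: "output_density g" "integrable q (tilted b g)" "integral\<^sup>L q (tilted b g) = c"
    using output_density_opt_dens[OF b] tilted_opt_dens[OF b] by (simp_all add: g_def c_def)
  then have pos: "AE y in q. 0 < g y" by (simp add: output_density_def)
  have tangent_int: "integrable q (\<lambda>y. c powr t * (t * tilted b g y / c + (1 - t)))"
    using g(2) by simp
  have int: "integrable q (tilted a g)"
    by (rule Bochner_Integration.integrable_bound[OF tangent_int])
       (use AE_tilted_le_tangent[OF t c pos] in \<open>auto elim!: AE_mp simp: tilted_nonneg measurable_q_iff g_def\<close>)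
  have "A a powr a \<le> integral\<^sup>L q (tilted a g)"
    using integral_tilted_ge[OF ab(1) g(1) int] .
  also have "\<dots> \<le> integral\<^sup>L q (\<lambda>y. c powr t * (t * tilted b g y / c + (1 - t)))"
    by (rule integral_mono_AE[OF int tangent_int AE_tilted_le_tangent[OF t c pos]])
  also have "\<dots> = c powr t"
    using integral_tangent[OF g(2,3)] c by simp
  finally have "ln (A a powr a) \<le> ln (c powr t)"
    using c A_pos[of a] ab by (subst ln_le_cancel_iff) auto
  then have "a * ln (A a) \<le> t * (b * ln (A b))"
    using c A_pos[of a] A_pos[of b] ab by (simp add: c_def ln_powr)
  then have "a * ln (A a) / (a - 1) \<le> t * (b * ln (A b)) / (a - 1)"
    using ab by (intro divide_right_mono) auto
  then show ?thesis using ab by (simp add: renyi_info_eq t_def)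
qed

lemma AE_entropy_le_tilted:
  assumes "0 < c" and g: "AE y in q. 0 < g y"
  shows "AE y in q. (a - 1) * (\<Sum>x\<in>set_pmf p. pmf p x * (dens x y * ln (dens x y)))
    \<le> tilted a g y / c + (ln c - 1) + (a - 1) * ln (g y)"
  using AE_sum_dens g
proof eventually_elim
  case (elim y)
  have "(a - 1) * (\<Sum>x\<in>set_pmf p. pmf p x * (dens x y * ln (dens x y)))
      = (\<Sum>x\<in>set_pmf p. pmf p x * ((a - 1) * (dens x y * ln (dens x y))))"
    by (simp add: sum_distrib_left algebra_simps)
  also have "\<dots> \<le> (\<Sum>x\<in>set_pmf p. pmf p x * (dens x y powr a * g y powr (1 - a) / c - dens x y
      + dens x y * ln c + (a - 1) * (dens x y * ln (g y))))"
    using assms elim by (intro sum_mono mult_left_mono mult_ln_le_tilted) (auto simp: dens_nonneg)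
  also have "\<dots> = tilted a g y / c + (ln c - 1 + (a - 1) * ln (g y)) * (\<Sum>x\<in>set_pmf p. pmf p x * dens x y)"
    unfolding tilted_def
    by (simp add: sum_distrib_left sum_divide_distrib sum_subtractf sum.distrib algebra_simps)
  finally show ?case using elim by simp
qed

lemma renyi_info_le_1:
  assumes a: "0 < a" "a < 1"
  shows "renyi_info a p W \<le> renyi_info 1 p W"
proof -
  define S where "S y = (\<Sum>x\<in>set_pmf p. pmf p x * (dens x y * ln (dens x y)))" for y
  define c where "c = integral\<^sup>L q (tilted a (\<lambda>_. 1))"
  note int = integral_tilted_le(1)[OF a output_density_1]
  have "AE y in q. min_weight \<le> tilted a (\<lambda>_. 1) y"
    using AE_pmean_bounds[OF a(1)]
  proof eventually_elim
    case (elim y)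
    have "min_weight = (min_weight powr (1 / a)) powr a" using min_weight_pos a by (simp add: powr_powr)
    also have "\<dots> \<le> pmean a y powr a" using elim a min_weight_pos by (intro powr_mono2) auto
    finally show ?case by (simp add: tilted_eq_pmean[OF a(1)])
  qed
  then have "min_weight \<le> c"
    unfolding c_def using integral_mono_AE[OF _ int, of "\<lambda>_. min_weight"] by (simp add: q.prob_space)
  then have c: "0 < c" using min_weight_pos by simp
  have "(a - 1) * renyi_info 1 p W = integral\<^sup>L q (\<lambda>y. (a - 1) * S y)"
    by (simp add: renyi_info_1_eq S_def)
  also have "\<dots> \<le> integral\<^sup>L q (\<lambda>y. tilted a (\<lambda>_. 1) y / c + (ln c - 1))"
    using AE_entropy_le_tilted[OF c, of "\<lambda>_. 1" a] int integrable_sum_mult_ln_dens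
    by (intro integral_mono_AE) (auto simp: S_def)
  also have "\<dots> = ln c" using int c by (simp add: q.prob_space flip: c_def)
  also have "\<dots> \<le> ln (A a powr a)"
    using c integral_tilted_le(2)[OF a output_density_1] by (subst ln_le_cancel_iff) (auto simp: c_def)
  also have "\<dots> = a * ln (A a)" using A_pos[OF a(1)] by (simp add: ln_powr)
  finally have "a * ln (A a) / (a - 1) \<le> (a - 1) * renyi_info 1 p W / (a - 1)"
    using a by (intro divide_right_mono_neg) auto
  then show ?thesis using a by (simp add: renyi_info_eq)
qed

lemma renyi_info_1_le:
  assumes b: "1 < b"
  shows "renyi_info 1 p W \<le> renyi_info b p W"
proof -
  define S where "S y = (\<Sum>x\<in>set_pmf p. pmf p x * (dens x y * ln (dens x y)))" for y
  define g where "g = opt_dens b"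
  define c where "c = A b powr b"
  have b0: "0 < b" and c: "0 < c" using b A_pos[of b] by (auto simp: c_def)
  have g: "output_density g" "integrable q (tilted b g)" "integral\<^sup>L q (tilted b g) = c"
    using output_density_opt_dens[OF b0] tilted_opt_dens[OF b0] by (simp_all add: g_def c_def)
  have pos: "AE y in q. 0 < g y" using g(1) by (simp add: output_density_def)
  have "AE y in q. (b - 1) * S y \<le> tilted b g y / c + (ln c - 1) + (b - 1) * (g y - 1)"
    using AE_entropy_le_tilted[OF c pos, of b] pos
  proof eventually_elim
    case (elim y)
    have "(b - 1) * ln (g y) \<le> (b - 1) * (g y - 1)"
      using b elim(2) by (intro mult_left_mono ln_le_minus_one) auto
    then show ?case using elim(1) by (simp add: S_def)
  qed
  then have "(b - 1) * renyi_info 1 p W \<le> integral\<^sup>L q (\<lambda>y. tilted b g y / c + (ln c - 1) + (b - 1) * (g y - 1))"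
    using g integrable_sum_mult_ln_dens unfolding renyi_info_1_eq output_density_def
    by (subst integral_mult_right_zero[symmetric], intro integral_mono_AE) (auto simp: S_def)
  also have "\<dots> = ln c"
    using g c unfolding output_density_def by (simp add: q.prob_space)
  also have "\<dots> = b * ln (A b)" using A_pos[OF b0] by (simp add: c_def ln_powr)
  finally have "(b - 1) * renyi_info 1 p W / (b - 1) \<le> b * ln (A b) / (b - 1)"
    using b by (intro divide_right_mono) auto
  then show ?thesis using b by (simp add: renyi_info_eq)
qed

lemma renyi_info_mono:
  assumes "0 < a" "a \<le> b"
  shows "renyi_info a p W \<le> renyi_info b p W"
proof -
  consider "a = b" | "b < 1" | "1 < a" | "a < 1" "b = 1" | "a = 1" "1 < b" | "a < 1" "1 < b"
    using assms by linarith
  then show ?thesis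
    using assms renyi_info_mono_below_1[of a b] renyi_info_mono_above_1[of a b]
      renyi_info_le_1[of a] renyi_info_1_le[of b]
    by cases fastforce+
qed

lemma renyi_info_scaled_antimono:
  assumes "0 < a" "a \<le> b" "b < 1"
  shows "(1 - b) / b * renyi_info b p W \<le> (1 - a) / a * renyi_info a p W"
proof -
  have "(1 - c) / c * renyi_info c p W = - ln (A c)" if "0 < c" "c < 1" for c
    using that by (simp add: renyi_info_eq field_simps)
  moreover have "ln (A a) \<le> ln (A b)"
    using A_mono[of a b] A_pos[of a] A_pos[of b] assms by simp
  ultimately show ?thesis using assms by simp
qed

lemma renyi_info_nonneg:
  assumes "0 < a" "a < 1"
  shows "0 \<le> renyi_info a p W"
proof -
  have "ln (A a) \<le> 0" using A_mono[of a 1] A_1 A_pos[of a] assms by simp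
  then show ?thesis
    using assms by (simp add: renyi_info_eq) (intro divide_nonpos_neg mult_nonneg_nonpos, auto)
qed

end

lemma ereal_mult_left_mono_neg: "k \<le> 0 \<Longrightarrow> (x::ereal) \<le> y \<Longrightarrow> ereal k * y \<le> ereal k * x"
  by (cases x; cases y; cases "k = 0") (auto simp: mult_left_mono_neg)

text \<open>\<open>C0\<close> is \<open>C\<^sub>0\<^sub>+\<close> (by monotonicity the infimum, see \<open>Lim_at_right_0\<close>) and \<open>order\<close> is \<open>\<chi>\<close>.\<close>

locale capacity_profile =
  fixes C :: "real \<Rightarrow> ereal"
  assumes C_mono: "\<And>a b. 0 < a \<Longrightarrow> a \<le> b \<Longrightarrow> C a \<le> C b"
    and C_nonneg: "\<And>a. 0 < a \<Longrightarrow> 0 \<le> C a"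
    and C_scaled_antimono:
      "\<And>a b. 0 < a \<Longrightarrow> a \<le> b \<Longrightarrow> b < 1 \<Longrightarrow> ereal ((1 - b) / b) * C b \<le> ereal ((1 - a) / a) * C a"
begin

definition sp :: "real \<Rightarrow> real \<Rightarrow> ereal" where "sp a R = ereal ((1 - a) / a) * (C a - ereal R)"

definition Esp :: "real \<Rightarrow> ereal" where "Esp R = (SUP a\<in>{0<..}. sp a R)"

definition C0 :: ereal where "C0 = (INF a\<in>{0<..}. C a)"

definition order :: ereal where "order = Sup {ereal a | a. 0 < a \<and> C a < \<infinity>}"

definition C_ext :: "ereal \<Rightarrow> ereal" where
  "C_ext x = (if x = \<infinity> then (SUP a\<in>{0<..}. C a) else C (real_of_ereal x))"

lemma sp_1 [simp]: "sp 1 R = 0"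
  by (simp add: sp_def)

lemma sp_le_Esp: "0 < a \<Longrightarrow> sp a R \<le> Esp R"
  unfolding Esp_def by (rule SUP_upper) auto

lemma Esp_nonneg: "0 \<le> Esp R"
  using sp_le_Esp[of 1 R] by simp

lemma sp_nonpos_below_1: "0 < a \<Longrightarrow> a \<le> 1 \<Longrightarrow> C a \<le> ereal R \<Longrightarrow> sp a R \<le> 0"
  unfolding sp_def using ereal_mult_left_mono[of "C a - ereal R" 0 "ereal ((1 - a) / a)"]
  by (simp add: ereal_minus_le_iff)

lemma sp_nonpos_above_1: "1 \<le> a \<Longrightarrow> ereal R \<le> C a \<Longrightarrow> sp a R \<le> 0"
  unfolding sp_def using ereal_mult_left_mono_neg[of "(1 - a) / a" 0 "C a - ereal R"]
  by (simp add: divide_nonpos_pos ereal_le_minus_iff)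

lemma sp_antimono_below_1: "0 < a \<Longrightarrow> a \<le> 1 \<Longrightarrow> R1 \<le> R2 \<Longrightarrow> sp a R2 \<le> sp a R1"
  unfolding sp_def by (rule ereal_mult_left_mono) (auto intro!: ereal_minus_mono)

lemma sp_mono_above_1: "1 \<le> a \<Longrightarrow> R1 \<le> R2 \<Longrightarrow> sp a R1 \<le> sp a R2"
  unfolding sp_def by (rule ereal_mult_left_mono_neg) (auto intro!: ereal_minus_mono divide_nonpos_pos)

lemma C0_le: "0 < a \<Longrightarrow> C0 \<le> C a"
  unfolding C0_def by (rule INF_lower) auto

lemma C0_nonneg: "0 \<le> C0"
  unfolding C0_def by (rule INF_greatest) (auto intro: C_nonneg)

lemma Lim_at_right_0: "Lim (at_right 0) C = C0"
proof (rule tendsto_Lim)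
  show "(C \<longlongrightarrow> C0) (at_right 0)"
  proof (rule order_tendstoI)
    fix y assume "y < C0"
    then show "eventually (\<lambda>a. y < C a) (at_right 0)"
      unfolding eventually_at_right[OF zero_less_one]
      using C0_le by (intro exI[of _ 1]) (auto intro: less_le_trans)
  next
    fix y assume "C0 < y"
    then obtain a where a: "0 < a" "C a < y" unfolding C0_def by (auto simp: INF_less_iff)
    then show "eventually (\<lambda>b. C b < y) (at_right 0)"
      unfolding eventually_at_right[OF a(1)]
    proof (intro exI[of _ a] conjI allI impI)
      fix b assume "0 < b" "b < a"
      then show "C b < y" using C_mono[of b a] a by auto
    qed (use a in auto)
  qed
qed simp

lemma sp_convex_combination:
  assumes "0 < a" "0 < l" "l < 1"
  shows "sp a (l * R1 + (1 - l) * R2) = ereal l * sp a R1 + ereal (1 - l) * sp a R2"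
proof -
  define k where "k = (1 - a) / a"
  consider "C a = \<infinity>" | v where "C a = ereal v"
    using C_nonneg[OF assms(1)] by (cases "C a") auto
  then show ?thesis
  proof cases
    case 1
    then show ?thesis unfolding sp_def k_def[symmetric] using assms
      by (cases "k = 0"; cases "k < 0") (auto simp: mult_neg_pos)
  next
    case 2
    then show ?thesis unfolding sp_def k_def[symmetric] by (simp add: algebra_simps)
  qed
qed

lemma Esp_convex:
  assumes "0 < l" "l < 1"
  shows "Esp (l * R1 + (1 - l) * R2) \<le> ereal l * Esp R1 + ereal (1 - l) * Esp R2"
  unfolding Esp_def[of "l * R1 + (1 - l) * R2"]
proof (rule SUP_least)
  fix a :: real assume "a \<in> {0<..}"
  then have "sp a (l * R1 + (1 - l) * R2) = ereal l * sp a R1 + ereal (1 - l) * sp a R2"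
    using assms by (intro sp_convex_combination) auto
  also have "\<dots> \<le> ereal l * Esp R1 + ereal (1 - l) * Esp R2"
    using assms \<open>a \<in> {0<..}\<close> by (intro add_mono ereal_mult_left_mono sp_le_Esp) auto
  finally show "sp a (l * R1 + (1 - l) * R2) \<le> ereal l * Esp R1 + ereal (1 - l) * Esp R2" .
qed

lemma sp_le_scaled_C: "0 < a \<Longrightarrow> a \<le> 1 \<Longrightarrow> 0 \<le> R \<Longrightarrow> sp a R \<le> ereal ((1 - a) / a) * C a"
  unfolding sp_def using ereal_minus_mono[of "C a" "C a" 0 "ereal R"]
  by (intro ereal_mult_left_mono) auto

lemma sp_above_1_le:
  assumes "1 \<le> a" "0 \<le> R"
  shows "sp a R \<le> ereal R"
proof -
  have "ereal (- R) \<le> C a - ereal R"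
    using C_nonneg[of a] assms ereal_minus_mono[of 0 "C a" "ereal R" "ereal R"] by simp
  then have "sp a R \<le> ereal ((1 - a) / a) * ereal (- R)"
    unfolding sp_def using assms by (intro ereal_mult_left_mono_neg) (auto simp: divide_nonpos_pos)
  also have "\<dots> \<le> ereal R"
    using assms by (simp add: field_simps mult_left_le_one_le)
  finally show ?thesis .
qed

text \<open>Below some \<open>a\<^sub>1 < 1\<close> with \<open>C a\<^sub>1 < R\<close> the terms are nonpositive, on \<open>[a\<^sub>1, 1)\<close> they are bounded
  by \<open>(1 - a\<^sub>1) / a\<^sub>1 \<cdot> C a\<^sub>1\<close>, and above 1 by \<open>R\<close>.\<close>

lemma Esp_less_infinity:
  assumes "C0 < ereal R" "0 \<le> R"
  shows "Esp R < \<infinity>"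
proof -
  obtain a0 where a0: "0 < a0" "C a0 < ereal R"
    using assms(1) unfolding C0_def by (auto simp: INF_less_iff)
  define a1 where "a1 = min a0 (1 / 2)"
  define k1 where "k1 = (1 - a1) / a1"
  have a1: "0 < a1" "a1 < 1" "C a1 < ereal R"
    using a0 C_mono[of a1 a0] by (auto simp: a1_def)
  then obtain v1 where v1: "C a1 = ereal v1" "v1 < R"
    using C_nonneg[of a1] by (cases "C a1") auto
  have "sp a R \<le> ereal (max R (k1 * v1))" if a: "0 < a" for a
  proof -
    consider "a \<le> a1" | "a1 < a" "a < 1" | "1 \<le> a" by linarith
    then show ?thesis
    proof cases
      case 1
      have "C a \<le> ereal R" using C_mono[OF a 1] v1 by (auto intro: order.trans)
      then have "sp a R \<le> 0" using a a1 1 by (intro sp_nonpos_below_1) auto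
      then show ?thesis using assms(2) by (simp add: le_max_iff_disj order_trans)
    next
      case 2
      have "sp a R \<le> ereal ((1 - a) / a) * C a" using 2 a assms(2) by (intro sp_le_scaled_C) auto
      also have "\<dots> \<le> ereal (k1 * v1)"
        using C_scaled_antimono[of a1 a] 2 a1 v1 by (simp add: k1_def)
      finally show ?thesis by (simp add: le_max_iff_disj)
    next
      case 3
      then have "sp a R \<le> ereal R" using assms(2) by (rule sp_above_1_le)
      then show ?thesis by (simp add: le_max_iff_disj)
    qed
  qed
  then have "Esp R \<le> ereal (max R (k1 * v1))" unfolding Esp_def by (intro SUP_least) auto
  then show ?thesis by (rule le_less_trans) (simp add: max_def)
qed

lemma Esp_antimono:
  assumes "R1 \<le> R2" "ereal R2 \<le> C 1"
  shows "Esp R2 \<le> Esp R1"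
  unfolding Esp_def[of R2]
proof (rule SUP_least)
  fix a :: real assume "a \<in> {0<..}"
  then have a: "0 < a" by simp
  show "sp a R2 \<le> Esp R1"
  proof (cases "a \<le> 1")
    case True
    then show ?thesis using sp_antimono_below_1[OF a True assms(1)] sp_le_Esp[OF a, of R1] by simp
  next
    case False
    then have "sp a R2 \<le> 0" using assms(2) C_mono[of 1 a] by (intro sp_nonpos_above_1) auto
    then show ?thesis using Esp_nonneg[of R1] by simp
  qed
qed

lemma Esp_mono:
  assumes "C 1 \<le> ereal R1" "R1 \<le> R2"
  shows "Esp R1 \<le> Esp R2"
  unfolding Esp_def[of R1]
proof (rule SUP_least)
  fix a :: real assume "a \<in> {0<..}"
  then have a: "0 < a" by simp
  show "sp a R1 \<le> Esp R2"
  proof (cases "a < 1")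
    case True
    then have "sp a R1 \<le> 0" using assms(1) C_mono[of a 1] a by (intro sp_nonpos_below_1) auto
    then show ?thesis using Esp_nonneg[of R2] by simp
  next
    case False
    then show ?thesis using sp_mono_above_1[of a R1 R2] assms sp_le_Esp[OF a, of R2] by simp
  qed
qed

lemma Esp_eq_infinity:
  assumes "ereal R < C0"
  shows "Esp R = \<infinity>"
proof (cases C0)
  case PInf
  then have "sp (1 / 2) R = \<infinity>" using C0_le[of "1 / 2"] by (simp add: sp_def)
  then show ?thesis using sp_le_Esp[of "1 / 2" R] by simp
next
  case (real c)
  then have d: "0 < c - R" using assms by simp
  show ?thesis
  proof (rule ereal_top)
    fix B
    define N where "N = max 0 (B / (c - R))"
    have N: "0 \<le> N" "B \<le> N * (c - R)" using d by (auto simp: N_def field_simps max_def)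
    define a where "a = 1 / (N + 2)"
    have a: "0 < a" "(1 - a) / a = N + 1" using N by (auto simp: a_def field_simps)
    have "ereal B \<le> ereal (N + 1) * (ereal c - ereal R)" using N d by (simp add: algebra_simps)
    also have "\<dots> \<le> ereal (N + 1) * (C a - ereal R)"
      using C0_le[OF a(1)] real N by (intro ereal_mult_left_mono ereal_minus_mono) auto
    also have "\<dots> = sp a R" by (simp add: sp_def a(2))
    also have "\<dots> \<le> Esp R" by (rule sp_le_Esp[OF a(1)])
    finally show "ereal B \<le> Esp R" .
  qed
qed (use C0_nonneg in simp)

lemma Esp_eq_SUP_on:
  assumes "S \<subseteq> {0<..}" "\<And>a. 0 < a \<Longrightarrow> a \<notin> S \<Longrightarrow> sp a R \<le> (SUP a\<in>S. sp a R)"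
  shows "Esp R = (SUP a\<in>S. sp a R)"
  unfolding Esp_def
proof (rule antisym)
  show "(SUP a\<in>{0<..}. sp a R) \<le> (SUP a\<in>S. sp a R)"
  proof (rule SUP_least)
    fix a :: real assume "a \<in> {0<..}"
    then show "sp a R \<le> (SUP a\<in>S. sp a R)"
      using assms(2)[of a] by (cases "a \<in> S") (auto intro: SUP_upper)
  qed
qed (use assms(1) in \<open>rule SUP_subset_mono, auto\<close>)

lemma Esp_eq_SUP_on_nonpos:
  assumes "S \<subseteq> {0<..}" "s \<in> S" "0 \<le> sp s R" "\<And>a. 0 < a \<Longrightarrow> a \<notin> S \<Longrightarrow> sp a R \<le> 0"
  shows "Esp R = (SUP a\<in>S. sp a R)"
  by (rule Esp_eq_SUP_on) (use assms in \<open>auto intro: order_trans SUP_upper2\<close>)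

lemma Esp_at_C0:
  assumes "ereal R = C0"
  shows "Esp R = (SUP a\<in>{0<..<1}. sp a R)"
proof (rule Esp_eq_SUP_on_nonpos)
  have "ereal R - ereal R \<le> C (1 / 2) - ereal R"
    using C0_le[of "1 / 2"] assms by (intro ereal_minus_mono) auto
  then show "0 \<le> sp (1 / 2) R"
    unfolding sp_def using ereal_mult_left_mono[of 0 "C (1 / 2) - ereal R" 1] by simp
  show "sp a R \<le> 0" if "0 < a" "a \<notin> {0<..<1}" for a
    using that C0_le[of a] assms by (intro sp_nonpos_above_1) auto
qed auto

lemma Esp_at_C_below_1:
  assumes "0 < \<phi>" "\<phi> < 1" "ereal R = C \<phi>"
  shows "Esp R = (SUP a\<in>{\<phi>..<1}. sp a R)"
proof (rule Esp_eq_SUP_on_nonpos)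
  show "sp a R \<le> 0" if "0 < a" "a \<notin> {\<phi>..<1}" for a
  proof (cases "a < \<phi>")
    case True
    then show ?thesis using that C_mono[of a \<phi>] assms by (intro sp_nonpos_below_1) auto
  next
    case False
    then show ?thesis using that C_mono[of \<phi> a] assms by (intro sp_nonpos_above_1) auto
  qed
qed (use assms in \<open>auto simp: sp_def\<close>)

lemma Esp_at_C_above_1:
  assumes "1 \<le> \<phi>" "ereal R = C \<phi>"
  shows "Esp R = (SUP a\<in>{1..\<phi>}. sp a R)"
proof (rule Esp_eq_SUP_on_nonpos)
  show "sp a R \<le> 0" if "0 < a" "a \<notin> {1..\<phi>}" for a
  proof (cases "a < 1")
    case True
    then show ?thesis using that C_mono[of a \<phi>] assms by (intro sp_nonpos_below_1) auto
  next
    case False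
    then show ?thesis using that C_mono[of \<phi> a] assms by (intro sp_nonpos_above_1) auto
  qed
qed (use assms in \<open>auto simp: sp_def\<close>)

lemma C_infinite_above_order:
  assumes "0 < a" "order < ereal a"
  shows "C a = \<infinity>"
proof (rule ccontr)
  assume "C a \<noteq> \<infinity>"
  then have "ereal a \<le> order" unfolding order_def using assms by (intro Sup_upper) (auto simp: less_top)
  then show False using assms by simp
qed

lemma sp_eq_minus_infinity: "1 < a \<Longrightarrow> C a = \<infinity> \<Longrightarrow> sp a R = - \<infinity>"
  using divide_neg_pos[of "1 - a" a] by (simp add: sp_def)

lemma C_below_1_le_C_ext_order: "0 < a \<Longrightarrow> ereal a < order \<Longrightarrow> C a \<le> C_ext order"
  by (cases order) (auto simp: C_ext_def intro: C_mono SUP_upper)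

lemma C_ext_1 [simp]: "C_ext 1 = C 1"
  by (simp add: C_ext_def one_ereal_def)

lemma Esp_order_eq_1:
  assumes "order = 1" "C 1 \<le> ereal R"
  shows "Esp R = 0"
proof -
  have "Esp R = (SUP a\<in>{1}. sp a R)"
  proof (rule Esp_eq_SUP_on_nonpos)
    show "sp a R \<le> 0" if "0 < a" "a \<notin> {1}" for a
    proof (cases "a < 1")
      case True
      have "C a \<le> ereal R" using assms C_mono[OF that(1), of 1] True by simp
      then show ?thesis using True that by (intro sp_nonpos_below_1) auto
    next
      case False
      then show ?thesis
        using that assms by (simp add: C_infinite_above_order sp_eq_minus_infinity)
    qed
  qed auto
  then show ?thesis by simp
qed

text \<open>The order \<open>x\<close> itself is excluded from the supremum, so \<open>sp x R\<close> is reached only as the limit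
  of the lower bounds \<open>(1 - b) / b \<cdot> (C x - R) \<le> sp b R\<close> for \<open>b \<up> x\<close>.\<close>

lemma sp_order_le_SUP:
  assumes order: "order = ereal x" "1 < x" and R: "C x \<le> ereal R"
  shows "sp x R \<le> (SUP a\<in>{a. 1 \<le> a \<and> ereal a < order}. sp a R)"
proof -
  obtain v where v: "C x = ereal v" using R C_nonneg[of x] order by (cases "C x") auto
  define g where "g b = ereal ((1 - b) / b * (v - R))" for b
  have "(g \<longlongrightarrow> g x) (at_left x)"
    unfolding g_def using order by (intro tendsto_intros) (auto intro!: tendsto_eq_intros)
  moreover have "eventually (\<lambda>b. g b \<le> (SUP a\<in>{a. 1 \<le> a \<and> ereal a < order}. sp a R)) (at_left x)"
    unfolding eventually_at_left[OF order(2)]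
  proof (intro exI[of _ 1] conjI allI impI)
    fix b assume b: "1 < b" "b < x"
    have "g b = ereal ((1 - b) / b) * (C x - ereal R)" by (simp add: g_def v algebra_simps)
    also have "\<dots> \<le> sp b R" unfolding sp_def
      using b C_mono[of b x] by (intro ereal_mult_left_mono_neg ereal_minus_mono) (auto intro!: divide_nonpos_pos)
    also have "\<dots> \<le> (SUP a\<in>{a. 1 \<le> a \<and> ereal a < order}. sp a R)"
      using b order by (intro SUP_upper) auto
    finally show "g b \<le> (SUP a\<in>{a. 1 \<le> a \<and> ereal a < order}. sp a R)" .
  qed (use order in auto)
  ultimately have "g x \<le> (SUP a\<in>{a. 1 \<le> a \<and> ereal a < order}. sp a R)"
    by (rule tendsto_upperbound) simp
  then show ?thesis by (simp add: g_def sp_def v algebra_simps)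
qed

lemma Esp_beyond_order:
  assumes R: "C_ext order \<le> ereal R" and order: "1 < order"
  shows "Esp R = (SUP a\<in>{a. 1 \<le> a \<and> ereal a < order}. sp a R)"
proof (rule Esp_eq_SUP_on)
  let ?S = "{a. 1 \<le> a \<and> ereal a < order}"
  have nonneg: "0 \<le> (SUP a\<in>?S. sp a R)"
    using order by (intro SUP_upper2[of 1]) (auto simp: one_ereal_def)
  fix a :: real assume a: "0 < a" "a \<notin> ?S"
  consider "a < 1" | "order < ereal a" | "order = ereal a"
    using a linorder_less_linear[of order "ereal a"] by (cases "a < 1") auto
  then show "sp a R \<le> (SUP a\<in>?S. sp a R)"
  proof cases
    case 1
    then have "ereal a < order"
      using order less_trans[of "ereal a" "ereal 1" order] by (simp add: one_ereal_def)
    then have "C a \<le> ereal R"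
      using C_below_1_le_C_ext_order[OF a(1)] R by (auto intro: order.trans)
    then have "sp a R \<le> 0" using 1 a by (intro sp_nonpos_below_1) auto
    then show ?thesis using nonneg by simp
  next
    case 2
    then have "1 < a" using order less_trans[of "ereal 1" order "ereal a"] by (simp add: one_ereal_def)
    then show ?thesis using 2 a by (simp add: C_infinite_above_order sp_eq_minus_infinity)
  next
    case 3
    then show ?thesis using order R by (intro sp_order_le_SUP) (auto simp: C_ext_def)
  qed
qed auto

lemma tendsto_sp: "0 < a \<Longrightarrow> ((\<lambda>R. sp a R) \<longlongrightarrow> sp a R0) (at R0 within S)"
proof -
  assume a: "0 < a"
  consider "C a = \<infinity>" | v where "C a = ereal v" using C_nonneg[OF a] by (cases "C a") auto
  then show ?thesis
  proof cases
    case 2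
    then have "sp a R = ereal ((1 - a) / a * (v - R))" for R by (simp add: sp_def)
    then show ?thesis by (simp only:) (intro tendsto_ereal tendsto_intros)
  qed (simp add: sp_def)
qed

lemma Esp_finite: "C0 < ereal R \<Longrightarrow> 0 \<le> R \<Longrightarrow> \<bar>Esp R\<bar> \<noteq> \<infinity>"
  using Esp_less_infinity[of R] Esp_nonneg[of R] by auto

lemma Esp_real:
  assumes "C0 = ereal c" "c < R"
  shows "Esp R = ereal (real_of_ereal (Esp R))"
  using Esp_finite[of R] C0_nonneg assms by (cases "Esp R") auto

lemma convex_on_Esp:
  assumes C0: "C0 = ereal c"
  shows "convex_on {c<..} (\<lambda>R. real_of_ereal (Esp R))"
  unfolding convex_on_def
proof (intro conjI ballI allI impI)
  fix x y u v :: real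
  assume xy: "x \<in> {c<..}" "y \<in> {c<..}" and uv: "0 \<le> u" "0 \<le> v" "u + v = 1"
  show "real_of_ereal (Esp (u *\<^sub>R x + v *\<^sub>R y)) \<le> u * real_of_ereal (Esp x) + v * real_of_ereal (Esp y)"
  proof (cases "u = 0 \<or> v = 0")
    case False
    then have u: "0 < u" "u < 1" and v: "v = 1 - u" using uv by auto
    define ex where "ex = real_of_ereal (Esp x)"
    define ey where "ey = real_of_ereal (Esp y)"
    have ex: "Esp x = ereal ex" and ey: "Esp y = ereal ey"
      unfolding ex_def ey_def using Esp_real[OF C0] xy by auto
    have "u * c + v * c < u * x + v * y"
      using xy u v by (intro add_strict_mono mult_strict_left_mono) auto
    then have "c < u * x + v * y" using uv by (simp flip: distrib_right)
    then have "ereal (real_of_ereal (Esp (u * x + v * y))) = Esp (u * x + (1 - u) * y)"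
      using Esp_real[OF C0] v by simp
    also have "\<dots> \<le> ereal u * Esp x + ereal (1 - u) * Esp y" by (rule Esp_convex[OF u])
    also have "\<dots> = ereal (u * ex + v * ey)"
      unfolding ex ey v by simp
    finally show ?thesis by (simp add: ex_def ey_def)
  qed (use uv in auto)
qed simp

lemma isCont_Esp:
  assumes C0: "C0 = ereal c" and R: "c < R"
  shows "isCont Esp R"
proof -
  have "continuous_on {c<..} (\<lambda>R. real_of_ereal (Esp R))"
    by (rule convex_on_continuous[OF open_greaterThan convex_on_Esp[OF C0]])
  then have "((\<lambda>R. ereal (real_of_ereal (Esp R))) \<longlongrightarrow> ereal (real_of_ereal (Esp R))) (at R)"
    using R by (intro tendsto_ereal) (simp add: continuous_on_eq_continuous_at isCont_def)
  moreover have "eventually (\<lambda>R'. ereal (real_of_ereal (Esp R')) = Esp R') (at R)"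
    using eventually_at_in_open'[OF open_greaterThan, of R c] R
    by (auto elim!: eventually_mono simp flip: Esp_real[OF C0])
  ultimately show ?thesis
    unfolding isCont_def using Esp_real[OF C0 R] by (auto intro: Lim_transform_eventually)
qed

text \<open>At \<open>c = C0\<close>, lower semicontinuity comes from \<open>Esp\<close> being a supremum of continuous functions,
  upper semicontinuity from convexity: \<open>Esp\<close> lies below its chord from \<open>c\<close> to \<open>c + 1\<close>.\<close>

lemma Esp_continuous_at_C0:
  assumes C0: "C0 = ereal c"
  shows "continuous (at c within {c..}) Esp"
  unfolding continuous_within at_within_Ici_at_right
proof (rule order_tendstoI)
  fix y assume "y < Esp c"
  then obtain a where a: "0 < a" "y < sp a c" unfolding Esp_def by (auto simp: less_SUP_iff)
  have "eventually (\<lambda>R. y < sp a R) (at_right c)" by (rule order_tendstoD(1)[OF tendsto_sp[OF a(1)] a(2)])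
  then show "eventually (\<lambda>R. y < Esp R) (at_right c)"
    by eventually_elim (use sp_le_Esp[OF a(1)] in \<open>auto intro: less_le_trans\<close>)
next
  fix y assume y: "Esp c < y"
  then obtain ec where ec: "Esp c = ereal ec" using Esp_nonneg[of c] by (cases "Esp c") auto
  define e1 where "e1 = real_of_ereal (Esp (c + 1))"
  have e1: "Esp (c + 1) = ereal e1" unfolding e1_def using Esp_real[OF C0, of "c + 1"] by simp
  define h where "h R = (c + 1 - R) * ec + (R - c) * e1" for R
  have "((\<lambda>R. ereal (h R)) \<longlongrightarrow> ereal (h c)) (at_right c)"
    unfolding h_def by (intro tendsto_ereal tendsto_intros)
  moreover have "ereal (h c) < y" using y ec by (simp add: h_def)
  ultimately have "eventually (\<lambda>R. ereal (h R) < y) (at_right c)" by (rule order_tendstoD(2))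
  moreover have "eventually (\<lambda>R. c < R \<and> R < c + 1) (at_right c)"
    unfolding eventually_at_right[of c "c + 1", simplified] by (intro exI[of _ "c + 1"]) auto
  ultimately show "eventually (\<lambda>R. Esp R < y) (at_right c)"
  proof eventually_elim
    case (elim R)
    define l where "l = c + 1 - R"
    have l: "0 < l" "l < 1" using elim by (auto simp: l_def)
    have "Esp R = Esp (l * c + (1 - l) * (c + 1))" by (simp add: l_def algebra_simps)
    also have "\<dots> \<le> ereal l * Esp c + ereal (1 - l) * Esp (c + 1)" by (rule Esp_convex[OF l])
    also have "\<dots> = ereal (h R)"
      unfolding ec e1 by (simp add: h_def l_def)
    finally show ?case using elim by simp
  qed
qed

lemma Esp_continuous_on: "continuous_on (closure {R. C0 < ereal R} \<inter> {0..}) Esp"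
proof (cases C0)
  case (real c)
  then have "closure {R. C0 < ereal R} \<inter> {0..} = {c..}"
    using C0_nonneg by (auto simp: closure_greaterThan greaterThan_def[symmetric])
  moreover have "continuous (at R within {c..}) Esp" if "c \<le> R" for R
    using that isCont_Esp[OF real, of R] Esp_continuous_at_C0[OF real]
    by (cases "R = c") (auto intro: continuous_at_imp_continuous_within)
  ultimately show ?thesis by (simp add: continuous_on_eq_continuous_within)
qed (use C0_nonneg in auto)

end

context
  fixes W :: "'x \<Rightarrow> 'y measure" and M :: "'y measure"
  assumes prob_space_W: "\<And>x. prob_space (W x)" and sets_W: "\<And>x. sets (W x) = sets M"
begin

lemma finite_inputI: "finite (set_pmf p) \<Longrightarrow> finite_input W M p"
  using prob_space_W sets_W by (simp add: finite_input_def)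

lemma renyi_cap_mono:
  assumes "0 < a" "a \<le> b"
  shows "renyi_cap a W \<le> renyi_cap b W"
  unfolding renyi_cap_def
  using finite_input.renyi_info_mono[OF finite_inputI assms] by (intro SUP_mono) auto

lemma renyi_cap_nonneg:
  assumes "0 < a"
  shows "0 \<le> renyi_cap a W"
proof -
  define p :: "'x pmf" where "p = return_pmf undefined"
  have p: "finite (set_pmf p)" by (simp add: p_def)
  have "0 \<le> ereal (renyi_info (min a (1 / 2)) p W)"
    using finite_input.renyi_info_nonneg[OF finite_inputI[OF p]] assms by simp
  also have "\<dots> \<le> renyi_cap (min a (1 / 2)) W"
    unfolding renyi_cap_def using p by (intro SUP_upper) auto
  also have "\<dots> \<le> renyi_cap a W"
    using assms by (intro renyi_cap_mono) auto
  finally show ?thesis .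
qed

lemma renyi_cap_scaled_antimono:
  assumes ab: "0 < a" "a \<le> b" "b < 1"
  shows "ereal ((1 - b) / b) * renyi_cap b W \<le> ereal ((1 - a) / a) * renyi_cap a W"
proof -
  define ka kb where "ka = (1 - a) / a" and "kb = (1 - b) / b"
  have k: "0 < ka" "0 < kb" using ab by (auto simp: ka_def kb_def)
  have "renyi_cap b W \<le> ereal (ka / kb) * renyi_cap a W"
    unfolding renyi_cap_def[of b]
  proof (rule SUP_least)
    fix p :: "'x pmf" assume p: "p \<in> {p. finite (set_pmf p)}"
    have "kb * renyi_info b p W \<le> ka * renyi_info a p W"
      using finite_input.renyi_info_scaled_antimono[OF finite_inputI ab] p by (simp add: ka_def kb_def)
    then have "ereal (renyi_info b p W) \<le> ereal (ka / kb) * ereal (renyi_info a p W)"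
      using k by (simp add: field_simps)
    also have "\<dots> \<le> ereal (ka / kb) * renyi_cap a W"
      using k p unfolding renyi_cap_def by (intro ereal_mult_left_mono SUP_upper) auto
    finally show "ereal (renyi_info b p W) \<le> ereal (ka / kb) * renyi_cap a W" .
  qed
  then have "ereal kb * renyi_cap b W \<le> ereal kb * (ereal (ka / kb) * renyi_cap a W)"
    using k by (intro ereal_mult_left_mono) auto
  also have "\<dots> = ereal ka * renyi_cap a W"
    using k by (simp flip: mult.assoc)
  finally show ?thesis by (simp add: ka_def kb_def)
qed

lemma capacity_profile: "capacity_profile (\<lambda>a. renyi_cap a W)"
  using renyi_cap_mono renyi_cap_nonneg renyi_cap_scaled_antimono by unfold_locales

end

theorem lemma13:
  fixes W :: "'x \<Rightarrow> 'y measure" and M :: "'y measure"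
  assumes "\<And>x. prob_space (W x)" and "\<And>x. sets (W x) = sets M"
  shows
    "(\<forall>R1 R2 l. 0 \<le> R1 \<and> 0 \<le> R2 \<and> 0 < l \<and> l < 1 \<longrightarrow>
        E_sp (l * R1 + (1 - l) * R2) W \<le> ereal l * E_sp R1 W + ereal (1 - l) * E_sp R2 W)
   \<and> (\<forall>R. 0 \<le> R \<and> renyi_cap0 W < ereal R \<longrightarrow> \<bar>E_sp R W\<bar> \<noteq> \<infinity>)
   \<and> continuous_on (closure {R. renyi_cap0 W < ereal R} \<inter> {0..}) (\<lambda>R. E_sp R W)
   \<and> (\<forall>R1 R2. 0 < R1 \<and> R1 \<le> R2 \<and> ereal R2 \<le> renyi_cap 1 W \<longrightarrow> E_sp R2 W \<le> E_sp R1 W)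
   \<and> (\<forall>R1 R2. 0 \<le> R1 \<and> renyi_cap 1 W \<le> ereal R1 \<and> R1 \<le> R2 \<longrightarrow> E_sp R1 W \<le> E_sp R2 W)
   \<and> (\<forall>R\<ge>0.
        (ereal R < renyi_cap0 W \<longrightarrow> E_sp R W = \<infinity>)
      \<and> (ereal R = renyi_cap0 W \<longrightarrow> E_sp R W = (SUP \<alpha>\<in>{0<..<1}. sp_term \<alpha> R W))
      \<and> (\<forall>\<phi>. 0 < \<phi> \<and> \<phi> < 1 \<and> ereal R = renyi_cap \<phi> W \<longrightarrow>
           E_sp R W = (SUP \<alpha>\<in>{\<phi>..<1}. sp_term \<alpha> R W))
      \<and> (renyi_cap_ext (cap_order W) W \<le> ereal R \<and> cap_order W = 1 \<longrightarrow> E_sp R W = 0)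
      \<and> (\<forall>\<phi>. 1 \<le> \<phi> \<and> ereal \<phi> < cap_order W \<and> ereal R = renyi_cap \<phi> W \<longrightarrow>
           E_sp R W = (SUP \<alpha>\<in>{1..\<phi>}. sp_term \<alpha> R W))
      \<and> (renyi_cap_ext (cap_order W) W \<le> ereal R \<and> 1 < cap_order W \<longrightarrow>
           E_sp R W = (SUP \<alpha>\<in>{\<alpha>. 1 \<le> \<alpha> \<and> ereal \<alpha> < cap_order W}. sp_term \<alpha> R W)))"
proof -
  interpret capacity_profile "\<lambda>a. renyi_cap a W" by (rule capacity_profile[OF assms])
  have [simp]: "sp_term a R W = sp a R" "E_sp R W = Esp R" "renyi_cap0 W = C0" "cap_order W = order"
    "renyi_cap_ext x W = C_ext x" for a R x
    by (simp_all add: sp_term_def sp_def E_sp_def Esp_def renyi_cap0_def Lim_at_right_0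
        cap_order_def order_def renyi_cap_ext_def C_ext_def)
  show ?thesis
    by (auto simp: Esp_convex Esp_finite Esp_continuous_on Esp_antimono Esp_mono Esp_eq_infinity
        Esp_at_C0 Esp_at_C_below_1 Esp_order_eq_1 Esp_at_C_above_1 Esp_beyond_order)
qed

end
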